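(* For a ring $R$, the following are equivalent: (1) $R$ is a DT ring; (2) $R$ is a semi-tripotent ring; (3) for each $a\in R$ there exist $e\in R$ with $e^2=e$, $v\in R$ with $v^2=1$ and $ev=ve$, and $j\in J(R)$, such that $a=e+v+j$.
   Context: All rings are associative with identity. $J(R)$ is the Jacobson radical, $U(R)$ the group of units. $\Delta(R)=\{x\in R: x+u\in U(R)\text{ for all }u\in U(R)\}$. $\mathrm{Tr}(R)=\{x\in R: x^3=x\}$. A ring $R$ is a DT ring if every $r\in R$ can be written $r=e+d$ with $e\in\mathrm{Tr}(R)$ and $d\in\Delta(R)$. A ring $R$ is semi-tripotent if every $r\in R$ can be written $r=e+j$ with $e\in\mathrm{Tr}(R)$ and $j\in J(R)$. *)

theory Defs
  imports Main
begin

definition units_of_ring :: "'a::ring_1 set" where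
  "units_of_ring = {u. \<exists>w. u * w = 1 \<and> w * u = 1}"

definition left_ideal :: "'a::ring_1 set \<Rightarrow> bool" where
  "left_ideal I \<longleftrightarrow> 0 \<in> I \<and> (\<forall>x\<in>I. \<forall>y\<in>I. x + y \<in> I) \<and> (\<forall>x\<in>I. - x \<in> I)
     \<and> (\<forall>r. \<forall>x\<in>I. r * x \<in> I)"

definition maximal_left_ideal :: "'a::ring_1 set \<Rightarrow> bool" where
  "maximal_left_ideal I \<longleftrightarrow> left_ideal I \<and> I \<noteq> UNIV \<and>
     (\<forall>K. left_ideal K \<and> I \<subseteq> K \<longrightarrow> K = I \<or> K = UNIV)"

definition jacobson :: "'a::ring_1 set" where
  "jacobson = \<Inter> {I. maximal_left_ideal I}"

definition Delta :: "'a::ring_1 set" where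
  "Delta = {x. \<forall>u\<in>units_of_ring. x + u \<in> units_of_ring}"

definition Tr :: "'a::ring_1 set" where
  "Tr = {x. x ^ 3 = x}"

definition DT_ring :: "'a::ring_1 itself \<Rightarrow> bool" where
  "DT_ring _ \<longleftrightarrow> (\<forall>r::'a. \<exists>e\<in>Tr. \<exists>d\<in>Delta. r = e + d)"

definition semi_tripotent :: "'a::ring_1 itself \<Rightarrow> bool" where
  "semi_tripotent _ \<longleftrightarrow> (\<forall>r::'a. \<exists>e\<in>Tr. \<exists>j\<in>jacobson. r = e + j)"

end

theory Submission
  imports Defs
begin

text \<open>Always \<open>J(R) \<subseteq> \<Delta>(R)\<close>. Conversely, in a DT ring take \<open>d \<in> \<Delta>(R)\<close> and write
  \<open>r = e + d'\<close>; then \<open>1 + r d = (1 + e d) + d' d\<close> is a unit, since \<open>\<Delta>(R)\<close> is closed under products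
  and \<open>1 + e d\<close> is a unit for every tripotent \<open>e\<close>, so \<open>d \<in> J(R)\<close>. A semi-tripotent ring has the
  decomposition (3): if \<open>a - 1 = t + j\<close>, take \<open>e = t\<^sup>2\<close> and \<open>v = t + 1 - t\<^sup>2\<close>.

  For the converse, (3) makes \<open>R/J(R)\<close> strongly invo-clean with zero radical. In such a ring a
  square-zero element \<open>n\<close> with \<open>2n = 0\<close> vanishes, as otherwise \<open>R n\<close> would contain \<open>2 \<times> 2\<close>
  matrix units over \<open>\<int>/2\<close> and an element with \<open>w\<^sup>4 \<noteq> w\<^sup>2\<close>, although \<open>y\<^sup>4 = y\<^sup>2\<close> whenever
  \<open>2y = 0\<close>. This forces \<open>6 = 0\<close> and \<open>x\<^sup>3 = x\<close>, so every element is a difference \<open>p - q\<close> of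
  orthogonal idempotents. By (3) idempotents lift modulo \<open>J(R)\<close>, the lifts can be made orthogonal,
  and their difference is a tripotent lift.\<close>

lemma units_of_ringI: "u * w = 1 \<Longrightarrow> w * u = 1 \<Longrightarrow> u \<in> units_of_ring"
  unfolding units_of_ring_def by blast

lemma units_of_ringE:
  assumes "u \<in> units_of_ring"
  obtains w where "u * w = 1" "w * u = 1"
  using assms unfolding units_of_ring_def by blast

lemma one_in_units_of_ring: "1 \<in> units_of_ring"
  by (auto intro: units_of_ringI)

lemma units_of_ring_mult:
  assumes "a \<in> units_of_ring" "b \<in> units_of_ring"
  shows "a * b \<in> units_of_ring"
proof -
  obtain wa wb where "a * wa = 1" "wa * a = 1" "b * wb = 1" "wb * b = 1"
    using assms by (meson units_of_ringE)
  then have "(a * b) * (wb * wa) = 1" "(wb * wa) * (a * b) = 1"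
    by (metis mult.assoc mult_1_left)+
  then show ?thesis by (rule units_of_ringI)
qed

lemma units_of_ring_uminus: "u \<in> units_of_ring \<Longrightarrow> - u \<in> units_of_ring"
  by (metis minus_mult_minus units_of_ringE units_of_ringI)

lemma involution_in_units_of_ring: "v * v = 1 \<Longrightarrow> v \<in> units_of_ring"
  by (rule units_of_ringI)

lemma left_ideal_extend:
  assumes M: "left_ideal M"
  shows "left_ideal {m + r * z | m r. m \<in> M}"
proof -
  have M_closed: "0 \<in> M" "\<And>x y. x \<in> M \<Longrightarrow> y \<in> M \<Longrightarrow> x + y \<in> M"
    "\<And>x. x \<in> M \<Longrightarrow> - x \<in> M" "\<And>s x. x \<in> M \<Longrightarrow> s * x \<in> M"
    using M unfolding left_ideal_def by blast+
  have "m1 + r1 * z + (m2 + r2 * z) = (m1 + m2) + (r1 + r2) * z"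
    "- (m1 + r1 * z) = - m1 + (- r1) * z" "s * (m1 + r1 * z) = s * m1 + (s * r1) * z"
    "0 = 0 + 0 * z" for m1 m2 r1 r2 s :: 'a
    by (simp_all add: algebra_simps)
  then show ?thesis
    unfolding left_ideal_def using M_closed by blast
qed

lemma left_ideal_zero: "left_ideal {0}"
  unfolding left_ideal_def by simp

lemma left_ideal_eq_UNIV: "left_ideal K \<Longrightarrow> 1 \<in> K \<Longrightarrow> K = UNIV"
  unfolding left_ideal_def by (metis UNIV_eq_I mult.right_neutral)

lemma left_ideal_chain_Union:
  assumes C: "C \<in> chains {K. left_ideal K}" and "C \<noteq> {}"
  shows "left_ideal (\<Union>C)"
  unfolding left_ideal_def
proof (intro conjI ballI allI)
  have ideals: "left_ideal K" if "K \<in> C" for K using C that by (auto dest: chainsD2)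
  show "0 \<in> \<Union>C" using \<open>C \<noteq> {}\<close> ideals unfolding left_ideal_def by blast
  fix x assume "x \<in> \<Union>C"
  then obtain K where K: "K \<in> C" "x \<in> K" by blast
  then show "- x \<in> \<Union>C" "\<And>r. r * x \<in> \<Union>C"
    using ideals[OF K(1)] unfolding left_ideal_def by blast+
  fix y assume "y \<in> \<Union>C"
  then obtain K' where K': "K' \<in> C" "y \<in> K'" by blast
  from chainsD[OF C K(1) K'(1)] have "x \<in> K \<union> K' \<and> y \<in> K \<union> K' \<and> (K \<union> K' = K \<or> K \<union> K' = K')"
    using K K' by blast
  then show "x + y \<in> \<Union>C"
    using K K' ideals unfolding left_ideal_def by (metis Union_iff)
qed

lemma exists_maximal_left_ideal:
  assumes "left_ideal I" "1 \<notin> I"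
  obtains M where "maximal_left_ideal M" "I \<subseteq> M"
proof -
  define A where "A = {K. left_ideal K \<and> 1 \<notin> K \<and> I \<subseteq> K}"
  have "\<exists>U\<in>A. \<forall>X\<in>C. X \<subseteq> U" if C: "C \<in> chains A" for C
  proof (cases "C = {}")
    case True then show ?thesis using assms by (auto simp: A_def)
  next
    case False
    have "C \<in> chains {K. left_ideal K}"
      using C by (auto simp: A_def chains_def chain_subset_def)
    then have "left_ideal (\<Union>C)" using False by (rule left_ideal_chain_Union)
    then have "\<Union>C \<in> A" using chainsD2[OF C] False by (auto simp: A_def)
    then show ?thesis by blast
  qed
  from Zorn_Lemma2[OF ballI, OF this] obtain M where M: "M \<in> A" "\<forall>X\<in>A. M \<subseteq> X \<longrightarrow> X = M" by blast
  have "maximal_left_ideal M"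
    unfolding maximal_left_ideal_def
    using M left_ideal_eq_UNIV by (auto simp: A_def)
  then show ?thesis using M that by (auto simp: A_def)
qed

section \<open>The Jacobson radical\<close>

lemma left_ideal_jacobson: "left_ideal jacobson"
  unfolding left_ideal_def jacobson_def maximal_left_ideal_def by auto

lemma jacobson_zero: "0 \<in> jacobson"
  and jacobson_add: "x \<in> jacobson \<Longrightarrow> y \<in> jacobson \<Longrightarrow> x + y \<in> jacobson"
  and jacobson_uminus: "x \<in> jacobson \<Longrightarrow> - x \<in> jacobson"
  and jacobson_mult_left: "x \<in> jacobson \<Longrightarrow> r * x \<in> jacobson"
  using left_ideal_jacobson unfolding left_ideal_def by blast+

lemma jacobson_diff: "x \<in> jacobson \<Longrightarrow> y \<in> jacobson \<Longrightarrow> x - y \<in> jacobson"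
  using jacobson_add[of x "- y"] jacobson_uminus by auto

lemma jacobson_left_invertible:
  assumes j: "j \<in> jacobson"
  shows "\<exists>y. y * (1 + j) = 1"
proof (rule ccontr)
  assume no_inverse: "\<nexists>y. y * (1 + j) = 1"
  define I where "I = {m + r * (1 + j) | m r. m \<in> {0}}"
  have "left_ideal I" unfolding I_def by (rule left_ideal_extend[OF left_ideal_zero])
  moreover have "1 \<notin> I" using no_inverse by (auto simp: I_def)
  ultimately obtain M where M: "maximal_left_ideal M" "I \<subseteq> M"
    by (rule exists_maximal_left_ideal)
  have "1 + j \<in> I" by (auto simp: I_def intro!: exI[of _ 1])
  then have "1 + j \<in> M" using M(2) by blast
  moreover have "j \<in> M" using j M(1) by (auto simp: jacobson_def)
  ultimately have "1 \<in> M"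
    using M(1) unfolding maximal_left_ideal_def left_ideal_def by (metis add_diff_cancel diff_conv_add_uminus)
  then show False using M(1) left_ideal_eq_UNIV unfolding maximal_left_ideal_def by blast
qed

lemma one_plus_jacobson_unit:
  assumes j: "j \<in> jacobson"
  shows "1 + j \<in> units_of_ring"
proof -
  obtain y where y: "y * (1 + j) = 1" using jacobson_left_invertible[OF j] by blast
  then have "y + y * j = 1" by (simp add: distrib_left)
  then have "y = 1 + (- (y * j))" by (metis add_diff_cancel_right' diff_conv_add_uminus)
  moreover have "- (y * j) \<in> jacobson" using jacobson_uminus jacobson_mult_left j by blast
  ultimately obtain z where z: "z * y = 1" using jacobson_left_invertible by metis
  have "z = z * (y * (1 + j))" using y by simp
  also have "\<dots> = 1 + j" using z by (simp add: mult.assoc[symmetric])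
  finally have "(1 + j) * y = 1" using z by simp
  from this y show ?thesis by (rule units_of_ringI)
qed

lemma one_notin_jacobson: "(1::'a::ring_1) \<notin> jacobson"
proof
  assume "(1::'a) \<in> jacobson"
  then have "(1::'a) + - 1 \<in> units_of_ring" by (intro one_plus_jacobson_unit jacobson_uminus)
  then obtain w :: 'a where "(1 + - 1) * w = 1" by (rule units_of_ringE)
  then show False by simp
qed

text \<open>If \<open>z\<close> avoided a maximal left ideal \<open>M\<close>, then \<open>M + R z = R\<close> would put some \<open>1 + r z\<close>
  into \<open>M\<close>.\<close>

lemma jacobson_iff_left_invertible:
  "z \<in> jacobson \<longleftrightarrow> (\<forall>r. \<exists>y. y * (1 + r * z) = 1)"
proof
  assume "z \<in> jacobson"
  then show "\<forall>r. \<exists>y. y * (1 + r * z) = 1"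
    using jacobson_mult_left jacobson_left_invertible by blast
next
  assume inv: "\<forall>r. \<exists>y. y * (1 + r * z) = 1"
  have "z \<in> M" if M: "maximal_left_ideal M" for M
  proof (rule ccontr)
    assume "z \<notin> M"
    have LM: "left_ideal M" and proper: "M \<noteq> UNIV"
      and maximal: "\<And>K. left_ideal K \<Longrightarrow> M \<subseteq> K \<Longrightarrow> K = M \<or> K = UNIV"
      using M unfolding maximal_left_ideal_def by blast+
    define K where "K = {m + r * z | m r. m \<in> M}"
    have "0 \<in> M" using LM by (simp add: left_ideal_def)
    moreover have "m = m + 0 * z" "z = 0 + 1 * z" for m by simp_all
    ultimately have "M \<subseteq> K" "z \<in> K" unfolding K_def by blast+
    moreover have "left_ideal K" unfolding K_def using LM by (rule left_ideal_extend)
    ultimately have "K = UNIV" using maximal \<open>z \<notin> M\<close> by blast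
    then have "1 \<in> K" by simp
    then obtain m r where mr: "1 = m + r * z" "m \<in> M" unfolding K_def by blast
    obtain y where "y * (1 + (- r) * z) = 1" using inv by blast
    moreover have "1 + (- r) * z = m" using mr(1) by (simp add: algebra_simps)
    ultimately have "y * m = 1" by simp
    moreover have "y * m \<in> M" using LM mr(2) by (simp add: left_ideal_def)
    ultimately have "1 \<in> M" by simp
    then show False using LM proper left_ideal_eq_UNIV by blast
  qed
  then show "z \<in> jacobson" unfolding jacobson_def by blast
qed

lemma jacobson_mult_right:
  assumes x: "x \<in> jacobson"
  shows "x * s \<in> jacobson"
  unfolding jacobson_iff_left_invertible
proof
  fix r
  have "1 + s * r * x \<in> units_of_ring"
    using x jacobson_mult_left one_plus_jacobson_unit by (metis mult.assoc)
  then obtain c where c: "c * (1 + s * r * x) = 1" by (blast elim: units_of_ringE)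
  have "(1 - r * x * c * s) * (1 + r * (x * s)) = 1 + r * x * s - r * x * (c * (1 + s * r * x)) * s"
    by (simp add: algebra_simps)
  also have "\<dots> = 1" using c by (simp add: mult.assoc)
  finally show "\<exists>y. y * (1 + r * (x * s)) = 1" by blast
qed

section \<open>The set \<open>\<Delta>(R)\<close>\<close>

lemma DeltaD: "d \<in> Delta \<Longrightarrow> u \<in> units_of_ring \<Longrightarrow> d + u \<in> units_of_ring"
  by (simp add: Delta_def)

lemma DeltaI: "(\<And>u. u \<in> units_of_ring \<Longrightarrow> d + u \<in> units_of_ring) \<Longrightarrow> d \<in> Delta"
  by (simp add: Delta_def)

lemma one_plus_Delta_unit: "d \<in> Delta \<Longrightarrow> 1 + d \<in> units_of_ring"
  using DeltaD one_in_units_of_ring by (metis add.commute)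

lemma Delta_add: "x \<in> Delta \<Longrightarrow> y \<in> Delta \<Longrightarrow> x + y \<in> Delta"
  by (intro DeltaI) (simp add: DeltaD add.assoc)

lemma Delta_uminus: "x \<in> Delta \<Longrightarrow> - x \<in> Delta"
proof (rule DeltaI)
  fix u :: 'a assume "x \<in> Delta" "u \<in> units_of_ring"
  then have "- (x + - u) \<in> units_of_ring" by (intro units_of_ring_uminus DeltaD)
  then show "- x + u \<in> units_of_ring" by simp
qed

lemma Delta_mult_unit_left:
  assumes d: "d \<in> Delta" and u: "u \<in> units_of_ring"
  shows "u * d \<in> Delta"
proof (rule DeltaI)
  fix v :: 'a assume v: "v \<in> units_of_ring"
  obtain w where w: "u * w = 1" "w * u = 1" using u by (rule units_of_ringE)
  have "w * v \<in> units_of_ring" using units_of_ringI[OF w(2,1)] v by (rule units_of_ring_mult)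
  then have "u * (d + w * v) \<in> units_of_ring" by (rule units_of_ring_mult[OF u DeltaD[OF d]])
  moreover have "u * (d + w * v) = u * d + v" using w by (simp add: distrib_left mult.assoc[symmetric])
  ultimately show "u * d + v \<in> units_of_ring" by simp
qed

lemma Delta_mult:
  assumes x: "x \<in> Delta" and d: "d \<in> Delta"
  shows "x * d \<in> Delta"
proof -
  have "(1 + x) * d + - d \<in> Delta"
    using x d by (intro Delta_add Delta_uminus Delta_mult_unit_left one_plus_Delta_unit)
  then show ?thesis by (simp add: algebra_simps)
qed

lemma jacobson_subset_Delta: "jacobson \<subseteq> Delta"
proof (intro subsetI DeltaI)
  fix j u :: 'a assume j: "j \<in> jacobson" and u: "u \<in> units_of_ring"
  obtain w where w: "u * w = 1" "w * u = 1" using u by (rule units_of_ringE)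
  have "u * (1 + w * j) \<in> units_of_ring"
    using u j by (intro units_of_ring_mult one_plus_jacobson_unit jacobson_mult_left)
  moreover have "u * (1 + w * j) = j + u" using w by (simp add: distrib_left mult.assoc[symmetric])
  ultimately show "j + u \<in> units_of_ring" by simp
qed

text \<open>Inverting \<open>1 + g d\<close> reduces to inverting \<open>g + g d g\<close> in the corner ring \<open>g R g\<close>:
  in the Peirce decomposition along \<open>g\<close> the element \<open>1 + g d\<close> is upper triangular.\<close>

lemma one_plus_idempotent_mult_unit:
  assumes g: "g * g = g"
    and L: "L * (g + g * d * g) = g" "(g + g * d * g) * L = g" "g * L = L" "L * g = L"
  shows "1 + g * d \<in> units_of_ring"
proof -
  have gg: "g * (g * x) = g * x" for x using g by (simp add: mult.assoc[symmetric])
  have Lg': "L * (g * x) = L * x" and gL': "g * (L * x) = L * x" for x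
    using L(3,4) by (metis mult.assoc)+
  have r1: "L * (d * g) = g - L" using L(1,4) by (simp add: algebra_simps Lg')
  have r1': "L * (d * (g * x)) = g * x - L * x" for x
    using arg_cong[OF r1, of "\<lambda>z. z * x"] by (simp add: algebra_simps)
  have r2: "g * (d * L) = g - L" using L(2,3) by (simp add: algebra_simps gg gL')
  have r2': "g * (d * (L * x)) = g * x - L * x" for x
    using arg_cong[OF r2, of "\<lambda>z. z * x"] by (simp add: algebra_simps)
  define Y where "Y = 1 - g + L - L * d + L * d * g"
  have "(1 + g * d) * Y = 1" unfolding Y_def
    by (simp add: algebra_simps g gg r2 r2' L(3,4) Lg' gL')
  moreover have "Y * (1 + g * d) = 1" unfolding Y_def
    by (simp add: algebra_simps g gg r1 r1' L(3,4) Lg' gL')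
  ultimately show ?thesis by (rule units_of_ringI)
qed

text \<open>Adding \<open>d\<close> to the involutions \<open>2g - 1 - (1 - g) d g\<close> and \<open>2g - 1 - g d (1 - g)\<close> gives units
  \<open>U\<close>, \<open>U'\<close> with \<open>U g = g + g d g = g U'\<close>, whence a left and a right inverse of \<open>g + g d g\<close>
  in \<open>g R g\<close>.\<close>

lemma Delta_corner_invertible:
  assumes g: "g * g = g" and d: "d \<in> Delta"
  obtains L where "L * (g + g * d * g) = g" "(g + g * d * g) * L = g" "g * L = L" "L * g = L"
proof -
  have gg: "g * (g * x) = g * x" for x using g by (simp add: mult.assoc[symmetric])
  define A where "A = g + g * d * g"
  have gA: "g * A = A" and Ag: "A * g = A" unfolding A_def by (simp_all add: algebra_simps g gg mult.assoc)
  define X where "X = g + g - 1 - (1 - g) * d * g"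
  have "X * X = 1" unfolding X_def by (simp add: algebra_simps g gg)
  then have "d + X \<in> units_of_ring" using d by (intro DeltaD involution_in_units_of_ring)
  then obtain N where N: "N * (d + X) = 1" by (blast elim: units_of_ringE)
  have "(d + X) * g = A" unfolding X_def A_def by (simp add: algebra_simps g gg)
  then have LA: "(g * N * g) * A = g" using N g gA by (metis mult.assoc mult_1_right)
  define X' where "X' = g + g - 1 - g * d * (1 - g)"
  have "X' * X' = 1" unfolding X'_def by (simp add: algebra_simps g gg)
  then have "d + X' \<in> units_of_ring" using d by (intro DeltaD involution_in_units_of_ring)
  then obtain N' where N': "(d + X') * N' = 1" by (blast elim: units_of_ringE)
  have "g * (d + X') = A" unfolding X'_def A_def by (simp add: algebra_simps g gg)
  then have AR: "A * (g * N' * g) = g" using N' g Ag by (metis mult.assoc mult_1_left)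
  have "g * N * g = (g * N * g) * (A * (g * N' * g))" using AR g by (simp add: mult.assoc)
  also have "\<dots> = g * N' * g" using LA g by (simp add: mult.assoc[symmetric])
  finally have "A * (g * N * g) = g" using AR by simp
  moreover have "g * (g * N * g) = g * N * g" "(g * N * g) * g = g * N * g"
    by (simp_all add: mult.assoc g gg)
  ultimately show ?thesis using LA that unfolding A_def by blast
qed

lemma one_plus_idempotent_mult_Delta_unit:
  assumes g: "g * g = g" and d: "d \<in> Delta"
  shows "1 + g * d \<in> units_of_ring"
  using Delta_corner_invertible[OF assms] one_plus_idempotent_mult_unit[OF g] by metis

text \<open>A tripotent \<open>e\<close> is the idempotent \<open>e\<^sup>2\<close> times the involution \<open>1 - e\<^sup>2 + e\<close>.\<close>

lemma one_plus_tripotent_mult_Delta_unit: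
  assumes e: "e * e * e = e" and d: "d \<in> Delta"
  shows "1 + e * d \<in> units_of_ring"
proof -
  define g where "g = e * e"
  have g: "g * g = g" "e * g = e" "g * e = e" unfolding g_def using e by (simp_all add: mult.assoc)
  define v where "v = 1 - g + e"
  have "v * v = 1" unfolding v_def by (simp add: algebra_simps g g_def[symmetric])
  then have "v * d \<in> Delta" using d by (intro Delta_mult_unit_left involution_in_units_of_ring)
  then have "1 + g * (v * d) \<in> units_of_ring" by (rule one_plus_idempotent_mult_Delta_unit[OF g(1)])
  moreover have "g * (v * d) = e * d" unfolding v_def by (simp add: algebra_simps g mult.assoc[symmetric])
  ultimately show ?thesis by simp
qed

lemma Tr_iff: "e \<in> Tr \<longleftrightarrow> e * e * e = e"
  by (simp add: Tr_def power3_eq_cube)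

lemma DT_ring_Delta_subset_jacobson:
  assumes DT: "DT_ring TYPE('a::ring_1)"
  shows "(Delta :: 'a set) \<subseteq> jacobson"
proof
  fix d :: 'a assume d: "d \<in> Delta"
  show "d \<in> jacobson"
    unfolding jacobson_iff_left_invertible
  proof
    fix r :: 'a
    obtain e d' where ed: "e \<in> Tr" "d' \<in> Delta" "r = e + d'" using DT unfolding DT_ring_def by blast
    have "d' * d + (1 + e * d) \<in> units_of_ring"
      using ed d by (intro DeltaD Delta_mult one_plus_tripotent_mult_Delta_unit) (simp_all add: Tr_iff)
    moreover have "d' * d + (1 + e * d) = 1 + r * d" using ed by (simp add: algebra_simps)
    ultimately show "\<exists>y. y * (1 + r * d) = 1" by (auto elim: units_of_ringE)
  qed
qed

lemma DT_ring_iff_semi_tripotent: "DT_ring TYPE('a::ring_1) \<longleftrightarrow> semi_tripotent TYPE('a)"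
  using DT_ring_Delta_subset_jacobson jacobson_subset_Delta
  unfolding DT_ring_def semi_tripotent_def by blast

lemma semi_tripotent_decomposition:
  fixes a :: "'a::ring_1"
  assumes "semi_tripotent TYPE('a)"
  obtains e v j where "e * e = e" "v * v = 1" "e * v = v * e" "j \<in> jacobson" "a = e + v + j"
proof -
  obtain t j where tj: "t \<in> Tr" "j \<in> jacobson" "a - 1 = t + j"
    using assms unfolding semi_tripotent_def by blast
  define g where "g = t * t"
  have g: "g * g = g" "t * g = t" "g * t = t" unfolding g_def using tj(1) by (simp_all add: Tr_iff mult.assoc)
  define v where "v = t + 1 - g"
  have "v * v = 1" "g * v = v * g" unfolding v_def by (simp_all add: algebra_simps g g_def[symmetric])
  moreover have "a = g + v + j" unfolding v_def using tj(3) by (simp add: algebra_simps)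
  ultimately show ?thesis using that g(1) tj(2) by blast
qed

section \<open>Strongly invo-clean rings\<close>

definition strongly_invo_clean :: "'a::ring_1 itself \<Rightarrow> bool" where
  "strongly_invo_clean _ \<longleftrightarrow>
     (\<forall>x::'a. \<exists>e v. e * e = e \<and> v * v = 1 \<and> e * v = v * e \<and> x = e + v)"

lemma strongly_invo_cleanE:
  fixes x :: "'a::ring_1"
  assumes "strongly_invo_clean TYPE('a)"
  obtains e v where "e * e = e" "v * v = 1" "e * v = v * e" "x = e + v"
  using assms unfolding strongly_invo_clean_def by blast

lemma idempotent_plus_involution_idempotent:
  fixes e v :: "'a::ring_1"
  assumes e: "e * e = e" and v: "v * v = 1" and ev: "e * v = v * e"
    and idem: "(e + v) * (e + v) = e + v"
  shows "e = 1 - (e + v)"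
proof -
  define x where "x = e + v"
  have h: "x - e * x - e * x + e = 1"
    unfolding x_def using v idem e ev by (simp add: algebra_simps)
  then have "e * (x - e * x - e * x + e) = e" by simp
  then have "e * x = 0" using e by (simp add: algebra_simps mult.assoc[symmetric])
  with h have "x + e = 1" by simp
  then show ?thesis unfolding x_def[symmetric] by (metis add_diff_cancel_left')
qed

lemma add_self_eq_0_mult_left: "a + a = 0 \<Longrightarrow> b * a + b * a = (0::'a::ring_1)"
  by (metis distrib_left mult_zero_right)

lemma add_self_eq_0_mult_right: "a + a = 0 \<Longrightarrow> a * b + a * b = (0::'a::ring_1)"
  by (metis distrib_right mult_zero_left)

lemma strongly_invo_clean_2torsion_fourth_power:
  fixes y :: "'a::ring_1"
  assumes sic: "strongly_invo_clean TYPE('a)" and y2: "y + y = 0"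
  shows "y * y * y * y = y * y"
proof -
  obtain e v where ev: "e * e = e" "v * v = 1" "e * v = v * e" "y = e + v"
    using sic by (rule strongly_invo_cleanE)
  have ey: "e * y + e * y = 0" and yy: "y * y + y * y = 0"
    using y2 by (simp_all add: add_self_eq_0_mult_left)
  have "(y - e) * (y - e) = 1" using ev by simp
  then have "y * y - (e * y + e * y) + e = 1" using ev by (simp add: algebra_simps)
  then have "e = 1 - y * y" using ey by (simp add: algebra_simps)
  then have "(1 - y * y) * (1 - y * y) = 1 - y * y" using ev(1) by simp
  then have "y * y * y * y - (y * y + y * y) = - (y * y)" by (simp add: algebra_simps)
  then have "y * y * y * y + y * y = y * y + y * y" using yy by (simp add: eq_neg_iff_add_eq_0)
  then show ?thesis by simp
qed

text \<open>\<open>f\<close>, \<open>A\<close>, \<open>B\<close> behave like the matrix units \<open>e\<^sub>2\<^sub>2\<close>, \<open>e\<^sub>1\<^sub>2\<close>, \<open>e\<^sub>2\<^sub>1\<close> over the field with two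
  elements, and \<open>w = e\<^sub>1\<^sub>2 + e\<^sub>2\<^sub>1 + e\<^sub>2\<^sub>2\<close> has \<open>w\<^sup>4 = w\<close>; the fourth power law then forces
  \<open>w\<^sup>2 = w\<close>, which only holds if \<open>f = 0\<close>.\<close>

lemma strongly_invo_clean_no_matrix_units:
  fixes f A B :: "'a::ring_1"
  assumes sic: "strongly_invo_clean TYPE('a)"
    and ff: "f * f = f" and Af: "A * f = A" and fA: "f * A = 0" and fB: "f * B = B"
    and Bf: "B * f = 0" and BA: "B * A = f"
    and A2: "A + A = 0" and B2: "B + B = 0" and f2: "f + f = 0"
  shows "f = 0"
proof -
  define g where "g = A * B"
  have AA: "A * A = 0" using Af fA by (metis mult.assoc mult_zero_right)
  have BB: "B * B = 0" using fB Bf by (metis mult.assoc mult_zero_left)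
  have gA: "g * A = A" and gB: "g * B = 0" and gf: "g * f = 0"
    unfolding g_def using BA Af BB Bf by (simp_all add: mult.assoc)
  have fg: "f * g = 0" unfolding g_def using fA by (simp add: mult.assoc[symmetric])
  define w where "w = A + B + f"
  have w2: "w + w = 0" unfolding w_def using A2 B2 f2 by (simp add: algebra_simps)
  have ww: "w * w = g + A + B"
  proof -
    have "w * w = g + A + B + (f + f)"
      unfolding w_def by (simp add: algebra_simps AA Af BA BB Bf fA fB ff g_def[symmetric])
    then show ?thesis using f2 by simp
  qed
  have www: "w * w * w = g + f"
  proof -
    have "w * w * w = g + f + (A + A)"
      unfolding ww unfolding w_def by (simp add: algebra_simps AA Af BA BB Bf gA gB gf g_def[symmetric])
    then show ?thesis using A2 by simp
  qed
  have "(g + f) * w = w" unfolding w_def by (simp add: algebra_simps gA gB gf fA fB ff)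
  then have "w * w * w * w = w" using www by simp
  then have "w = g + A + B" using strongly_invo_clean_2torsion_fourth_power[OF sic w2] ww by simp
  then have "f = g" unfolding w_def by (simp add: algebra_simps)
  then show ?thesis using ff fg by simp
qed

lemma strongly_invo_clean_2torsion_square_zero_ideal:
  fixes n s :: "'a::ring_1"
  assumes sic: "strongly_invo_clean TYPE('a)" and nn: "n * n = 0" and n2: "n + n = 0"
  shows "(s * n) * (s * n) = 0"
proof -
  define y where "y = s * n"
  have y2: "y + y = 0" unfolding y_def using n2 by (rule add_self_eq_0_mult_left)
  have y4: "y * y * y * y = y * y"
    using sic y2 by (rule strongly_invo_clean_2torsion_fourth_power)
  define f where "f = y * y"
  define p where "p = y * y * y"
  have ff: "f * f = f" and fp: "f * p = p" and psn: "p * s * n = f"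
    unfolding f_def p_def using y4 by (simp_all add: mult.assoc y_def)
  have fn: "f * n = 0" unfolding f_def y_def using nn by (simp add: mult.assoc)
  define A where "A = n * f"
  define B where "B = p * s * (1 - f)"
  have "f = 0"
  proof (rule strongly_invo_clean_no_matrix_units[OF sic])
    show "f * f = f" by (rule ff)
    show "A * f = A" unfolding A_def using ff by (simp add: mult.assoc)
    show "f * A = 0" unfolding A_def using fn by (simp flip: mult.assoc)
    show "f * B = B" unfolding B_def using fp by (simp flip: mult.assoc)
    show "B * f = 0" unfolding B_def using ff by (simp add: algebra_simps mult.assoc)
    have "B * A = p * s * n * f - p * s * (f * n) * f"
      unfolding A_def B_def by (simp add: algebra_simps)
    then show "B * A = f" using psn fn ff by simp
    show "A + A = 0" "f + f = 0" "B + B = 0"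
      unfolding A_def B_def f_def p_def using n2 y2
      by (simp_all add: add_self_eq_0_mult_left add_self_eq_0_mult_right)
  qed
  then show ?thesis unfolding f_def y_def .
qed

lemma strongly_invo_clean_2torsion_square_zero_jacobson:
  fixes n :: "'a::ring_1"
  assumes sic: "strongly_invo_clean TYPE('a)" and "n * n = 0" and "n + n = 0"
  shows "n \<in> jacobson"
  unfolding jacobson_iff_left_invertible
proof
  fix r :: 'a
  have "(1 - r * n) * (1 + r * n) = 1 - (r * n) * (r * n)" by (simp add: algebra_simps)
  also have "\<dots> = 1" using strongly_invo_clean_2torsion_square_zero_ideal[OF assms] by simp
  finally show "\<exists>y. y * (1 + r * n) = 1" by blast
qed

lemma mult_numeral_commute: "x * numeral k = numeral k * (x::'a::ring_1)"
  by (metis of_nat_numeral mult_of_nat_commute)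

lemma numeral_mult_add: "numeral a * x + numeral b * x = numeral (a + b) * (x::'a::ring_1)"
  by (simp only: distrib_right[symmetric] numeral_plus_numeral)

lemma add_numeral_mult: "x + numeral b * x = numeral (Num.One + b) * (x::'a::ring_1)"
  using numeral_mult_add[of Num.One x b] by (simp only: numeral_One mult_1_left)

lemma three_mult_eq_add: "3 * x = x + x + (x::'a::ring_1)"
  using numeral_mult_add[of Num.One x "Num.Bit0 Num.One"] by (simp add: mult_2 add.assoc)

lemma numeral_mult_numeral_mult:
  "numeral a * x * (numeral b * y) = numeral (a * b) * (x * (y::'a::ring_1))"
proof -
  have "numeral a * x * (numeral b * y) = numeral a * (x * numeral b) * y" by (simp add: mult.assoc)
  also have "\<dots> = (numeral a * numeral b) * (x * y)" by (simp add: mult_numeral_commute[of x] mult.assoc)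
  finally show ?thesis by simp
qed

lemma strongly_invo_clean_six_eq_0:
  assumes sic: "strongly_invo_clean TYPE('a::ring_1)"
    and reduced: "\<And>w::'a. w + w = 0 \<Longrightarrow> w * w = 0 \<Longrightarrow> w = 0"
  shows "(6::'a) = 0"
proof -
  obtain e v :: 'a where ev: "e * e = e" "v * v = 1" "3 = e + v"
    using sic by (rule strongly_invo_cleanE)
  have "e = 3 - v" using ev(3) by (simp add: eq_diff_eq)
  then have "(3 - v) * (3 - v) - (3 - v) = 0" using ev(1) by simp
  moreover have "(3 - v) * (3 - v) - (3 - v) = 7 - 5 * v"
    using ev(2) by (simp add: algebra_simps mult_numeral_commute[of v] numeral_mult_add add_numeral_mult)
  ultimately have "7 = 5 * v" by simp
  then have "(7::'a) * 7 = 5 * v * (5 * v)" by simp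
  then have "(24::'a) + 25 = 0 + 25" using ev(2) by (simp add: numeral_mult_numeral_mult)
  then have 24: "(24::'a) = 0" by (rule add_right_cancel[THEN iffD1])
  have "(12::'a) + 12 = 24" "(12::'a) * 12 = 6 * 24" by simp_all
  then have 12: "(12::'a) = 0" using 24 reduced by simp
  have "(6::'a) + 6 = 12" "(6::'a) * 6 = 3 * 12" by simp_all
  then show ?thesis using 12 reduced by simp
qed

lemma three_mult_eq_0:
  fixes u :: "'a::ring_1"
  assumes six: "(6::'a) = 0" and reduced: "\<And>w::'a. w + w = 0 \<Longrightarrow> w * w = 0 \<Longrightarrow> w = 0"
    and uu: "u * u = 2 * u"
  shows "3 * u = 0"
proof (rule reduced)
  show "3 * u + 3 * u = 0" using six by (simp add: numeral_mult_add)
  have "3 * u * (3 * u) = 9 * (2 * u)" using uu by (simp add: numeral_mult_numeral_mult)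
  also have "\<dots> = (3 * 6) * u" by (simp add: mult.assoc[symmetric])
  finally show "3 * u * (3 * u) = 0" using six by simp
qed

lemma strongly_invo_clean_tripotent:
  fixes x :: "'a::ring_1"
  assumes sic: "strongly_invo_clean TYPE('a)"
    and reduced: "\<And>w::'a. w + w = 0 \<Longrightarrow> w * w = 0 \<Longrightarrow> w = 0"
  shows "x * x * x = x"
proof -
  have six: "(6::'a) = 0" using sic reduced by (rule strongly_invo_clean_six_eq_0)
  obtain e v where ev: "e * e = e" "v * v = 1" "e * v = v * e" "x = e + v"
    using sic by (rule strongly_invo_cleanE)
  have ee: "e * (e * t) = e * t" and vv: "v * (v * t) = t" and ve: "v * (e * t) = e * (v * t)" for t
    using ev by (metis mult.assoc mult_1_left)+
  define u where "u = e + e * v"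
  have "u * u = 2 * u" unfolding u_def mult_2 by (simp add: algebra_simps ev(1,2) ev(3)[symmetric] ee vv ve)
  then have "3 * u = 0" using six reduced three_mult_eq_0 by metis
  moreover have "x * x * x = x + 3 * u"
    unfolding three_mult_eq_add u_def ev(4) by (simp add: algebra_simps ev(1,2) ev(3)[symmetric] ee vv ve)
  ultimately show ?thesis by simp
qed

text \<open>Products of integer combinations of \<open>a\<close> and \<open>a\<^sup>2\<close> only use \<open>a\<^sup>3 = a\<close>, so identities among
  them reduce to arithmetic on the coefficients.\<close>

definition tripotent_comb :: "'a::ring_1 \<Rightarrow> int \<Rightarrow> int \<Rightarrow> 'a" where
  "tripotent_comb a i j = of_int i * a + of_int j * (a * a)"

lemma of_int_mult_of_int_mult: "of_int i * x * (of_int l * y) = of_int (i * l) * (x * (y::'a::ring_1))"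
  by (metis mult.assoc mult_of_int_commute of_int_mult)

lemma tripotent_comb_mult:
  assumes a: "a * a * a = a"
  shows "tripotent_comb a i j * tripotent_comb a k l = tripotent_comb a (i * l + j * k) (i * k + j * l)"
proof -
  have a': "a * (a * a) = a" "a * a * (a * a) = a * a" using a by (simp_all add: mult.assoc[symmetric])
  have "tripotent_comb a i j * tripotent_comb a k l = of_int (i * k) * (a * a) + of_int (i * l) * (a * (a * a))
      + of_int (j * k) * (a * a * a) + of_int (j * l) * (a * a * (a * a))"
    unfolding tripotent_comb_def by (simp add: distrib_left distrib_right of_int_mult_of_int_mult add.assoc)
  also have "\<dots> = tripotent_comb a (i * l + j * k) (i * k + j * l)"
    unfolding tripotent_comb_def a a' by (simp add: algebra_simps)
  finally show ?thesis .
qed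

lemma tripotent_comb_diff: "tripotent_comb a i j - tripotent_comb a k l = tripotent_comb a (i - k) (j - l)"
  unfolding tripotent_comb_def by (simp add: algebra_simps)

lemma tripotent_comb_eq_0:
  assumes six: "(6::'a::ring_1) = 0" and three: "3 * (a * a + a) = (0::'a)"
  shows "tripotent_comb a (6 * i + 3 * k) (6 * j + 3 * k) = 0"
proof -
  have "(of_int (6 * i + 3 * k) :: 'a) = 6 * of_int i + 3 * of_int k" for i by simp
  then have "tripotent_comb a (6 * i + 3 * k) (6 * j + 3 * k) = 3 * of_int k * a + 3 * of_int k * (a * a)"
    unfolding tripotent_comb_def using six by (simp add: distrib_right)
  also have "\<dots> = of_int k * (3 * (a * a + a))"
    unfolding mult_of_int_commute[of k 3, symmetric] by (simp add: mult.assoc distrib_left add.commute)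
  also have "\<dots> = 0" using three by simp
  finally show ?thesis .
qed

lemma strongly_invo_clean_orthogonal_idempotents:
  fixes a :: "'a::ring_1"
  assumes sic: "strongly_invo_clean TYPE('a)"
    and reduced: "\<And>w::'a. w + w = 0 \<Longrightarrow> w * w = 0 \<Longrightarrow> w = 0"
  obtains p q where "p * p = p" "q * q = q" "p * q = 0" "q * p = 0" "a = p - q"
proof -
  have six: "(6::'a) = 0" using sic reduced by (rule strongly_invo_clean_six_eq_0)
  have a: "a * a * a = a" using sic reduced by (rule strongly_invo_clean_tripotent)
  then have "a * (a * a) = a" "a * (a * (a * a)) = a * a" by (simp_all add: mult.assoc[symmetric])
  then have "(a * a + a) * (a * a + a) = 2 * (a * a + a)"
    unfolding mult_2 by (simp add: algebra_simps)
  then have "3 * (a * a + a) = 0" using six reduced three_mult_eq_0 by metis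
  note zero = tripotent_comb_eq_0[OF six this]
  define p where "p = tripotent_comb a 2 5"
  define q where "q = tripotent_comb a 1 5"
  have "p * p - p = tripotent_comb a 18 24" "q * q - q = tripotent_comb a 9 21"
    "p * q = tripotent_comb a 15 27" "q * p = tripotent_comb a 15 27"
    unfolding p_def q_def tripotent_comb_mult[OF a] tripotent_comb_diff by simp_all
  moreover have "tripotent_comb a 18 24 = 0" "tripotent_comb a 9 21 = 0" "tripotent_comb a 15 27 = 0"
    using zero[of 3 0 4] zero[of 1 1 3] zero[of 2 1 4] by simp_all
  moreover have "a = p - q" unfolding p_def q_def tripotent_comb_def by (simp add: mult_2)
  ultimately show ?thesis using that by simp
qed

section \<open>The quotient ring \<open>R/J(R)\<close>\<close>

quotient_type (overloaded) 'a jquot = "'a::ring_1" / "\<lambda>x y. x - y \<in> jacobson"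
proof (rule equivpI)
  show "reflp (\<lambda>x y::'a. x - y \<in> jacobson)" by (simp add: reflp_def jacobson_zero)
  show "symp (\<lambda>x y::'a. x - y \<in> jacobson)"
    by (rule sympI) (metis jacobson_uminus minus_diff_eq)
  show "transp (\<lambda>x y::'a. x - y \<in> jacobson)"
    by (rule transpI) (drule (1) jacobson_add, simp)
qed

instantiation jquot :: (ring_1) ring_1
begin

lift_definition zero_jquot :: "'a jquot" is 0 .

lift_definition one_jquot :: "'a jquot" is 1 .

lift_definition plus_jquot :: "'a jquot \<Rightarrow> 'a jquot \<Rightarrow> 'a jquot" is "(+)"
  by (drule (1) jacobson_add) (simp add: algebra_simps)

lift_definition uminus_jquot :: "'a jquot \<Rightarrow> 'a jquot" is uminus
  by (drule jacobson_uminus) (simp add: algebra_simps)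

lift_definition minus_jquot :: "'a jquot \<Rightarrow> 'a jquot \<Rightarrow> 'a jquot" is "(-)"
  by (drule (1) jacobson_diff) (simp add: algebra_simps)

lift_definition times_jquot :: "'a jquot \<Rightarrow> 'a jquot \<Rightarrow> 'a jquot" is "(*)"
proof -
  fix x x' y y' :: 'a
  assume "x - x' \<in> jacobson" "y - y' \<in> jacobson"
  then have "(x - x') * y + x' * (y - y') \<in> jacobson"
    by (intro jacobson_add jacobson_mult_right jacobson_mult_left)
  then show "x * y - x' * y' \<in> jacobson" by (simp add: algebra_simps)
qed

instance
proof
  fix a b c :: "'a jquot"
  show "a + b + c = a + (b + c)" by transfer (simp add: jacobson_zero add.assoc)
  show "a + b = b + a" by transfer (simp add: jacobson_zero add.commute)
  show "0 + a = a" by transfer (simp add: jacobson_zero)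
  show "- a + a = 0" by transfer (simp add: jacobson_zero)
  show "a - b = a + - b" by transfer (simp add: jacobson_zero)
  show "a * b * c = a * (b * c)" by transfer (simp add: jacobson_zero mult.assoc)
  show "(a + b) * c = a * c + b * c" by transfer (simp add: jacobson_zero distrib_right)
  show "a * (b + c) = a * b + a * c" by transfer (simp add: jacobson_zero distrib_left)
  show "1 * a = a" by transfer (simp add: jacobson_zero)
  show "a * 1 = a" by transfer (simp add: jacobson_zero)
  show "(0::'a jquot) \<noteq> 1" by transfer (metis one_notin_jacobson jacobson_uminus minus_minus diff_0)
qed

end

lemma abs_jquot_eq_iff: "abs_jquot x = abs_jquot y \<longleftrightarrow> x - y \<in> jacobson"
  by (simp add: jquot.abs_eq_iff)

lemma abs_jquot_add: "abs_jquot (x + y) = abs_jquot x + abs_jquot y"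
  and abs_jquot_mult: "abs_jquot (x * y) = abs_jquot x * abs_jquot y"
  and abs_jquot_diff: "abs_jquot (x - y) = abs_jquot x - abs_jquot y"
  and abs_jquot_uminus: "abs_jquot (- x) = - abs_jquot x"
  and abs_jquot_one: "abs_jquot 1 = 1"
  and abs_jquot_zero: "abs_jquot 0 = 0"
  by (simp_all add: plus_jquot.abs_eq times_jquot.abs_eq minus_jquot.abs_eq uminus_jquot.abs_eq
      one_jquot_def zero_jquot_def)

lemma abs_jquot_numeral: "abs_jquot (numeral k) = numeral k"
  by (induct k) (simp_all only: numeral.simps abs_jquot_add abs_jquot_one)

lemmas abs_jquot_hom = abs_jquot_add abs_jquot_mult abs_jquot_diff abs_jquot_uminus abs_jquot_one
  abs_jquot_zero abs_jquot_numeral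

lemma abs_jquot_eq_0_iff: "abs_jquot x = 0 \<longleftrightarrow> x \<in> jacobson"
  using abs_jquot_eq_iff[of x 0] by (simp add: abs_jquot_zero)

lemma abs_jquot_surj: obtains x where "abs_jquot x = s"
  by (induct s rule: jquot.abs_induct) blast

text \<open>Both \<open>a b\<close> and \<open>b a\<close> are \<open>1\<close> modulo \<open>J(R)\<close>, hence units; a right inverse of \<open>a b\<close> and a
  left inverse of \<open>b a\<close> then give inverses of \<open>a\<close> on both sides, and they coincide.\<close>

lemma units_of_ring_lift:
  assumes "abs_jquot a \<in> units_of_ring"
  shows "a \<in> units_of_ring"
proof -
  obtain s where "abs_jquot a * s = 1" "s * abs_jquot a = 1"
    using assms by (rule units_of_ringE)
  moreover obtain b where b: "abs_jquot b = s" by (rule abs_jquot_surj)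
  ultimately have "a * b - 1 \<in> jacobson" "b * a - 1 \<in> jacobson"
    by (simp_all add: abs_jquot_eq_iff[symmetric] abs_jquot_hom)
  then have "1 + (a * b - 1) \<in> units_of_ring" "1 + (b * a - 1) \<in> units_of_ring"
    by (simp_all only: one_plus_jacobson_unit)
  then have "a * b \<in> units_of_ring" "b * a \<in> units_of_ring" by simp_all
  then obtain w w' where w: "a * b * w = 1" and w': "w' * (b * a) = 1"
    by (meson units_of_ringE)
  have "w' * b = w' * b * (a * (b * w))" using w by (simp add: mult.assoc)
  also have "\<dots> = b * w" using w' by (simp add: mult.assoc[symmetric])
  finally have "(b * w) * a = 1" using w' by (metis mult.assoc)
  moreover have "a * (b * w) = 1" using w by (simp add: mult.assoc)
  ultimately show ?thesis by (intro units_of_ringI)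
qed

lemma jacobson_jquot: "(jacobson :: 'a::ring_1 jquot set) = {0}"
proof (intro equalityI subsetI)
  fix w :: "'a jquot" assume w: "w \<in> jacobson"
  obtain x where x: "abs_jquot x = w" by (rule abs_jquot_surj)
  have "x \<in> jacobson"
    unfolding jacobson_iff_left_invertible
  proof
    fix r :: 'a
    have "abs_jquot (1 + r * x) = 1 + abs_jquot r * w" using x by (simp add: abs_jquot_hom)
    also have "\<dots> \<in> units_of_ring" using w by (intro one_plus_jacobson_unit jacobson_mult_left)
    finally have "1 + r * x \<in> units_of_ring" by (rule units_of_ring_lift)
    then show "\<exists>y. y * (1 + r * x) = 1" by (meson units_of_ringE)
  qed
  then show "w \<in> {0}" using x abs_jquot_eq_0_iff by blast
qed (simp add: jacobson_zero)

section \<open>Lifting modulo the Jacobson radical\<close>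

lemma strongly_invo_clean_jquot:
  assumes decomp: "\<forall>a::'a::ring_1. \<exists>e v j. e * e = e \<and> v * v = 1 \<and> e * v = v * e \<and>
      j \<in> jacobson \<and> a = e + v + j"
  shows "strongly_invo_clean TYPE('a jquot)"
  unfolding strongly_invo_clean_def
proof
  fix s :: "'a jquot"
  obtain x where x: "abs_jquot x = s" by (rule abs_jquot_surj)
  obtain e v j where evj: "e * e = e" "v * v = 1" "e * v = v * e" "j \<in> jacobson" "x = e + v + j"
    using decomp by blast
  have "abs_jquot j = 0" using evj(4) by (simp add: abs_jquot_eq_0_iff)
  then have "s = abs_jquot e + abs_jquot v" using x evj(5) by (simp add: abs_jquot_hom)
  moreover have "abs_jquot e * abs_jquot e = abs_jquot e" "abs_jquot v * abs_jquot v = 1"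
    "abs_jquot e * abs_jquot v = abs_jquot v * abs_jquot e"
    using evj(1-3) by (simp_all flip: abs_jquot_hom)
  ultimately show "\<exists>e v. e * e = e \<and> v * v = 1 \<and> e * v = v * e \<and> s = e + v" by blast
qed

lemma idempotent_lift:
  fixes x :: "'a::ring_1"
  assumes decomp: "\<forall>a::'a. \<exists>e v j. e * e = e \<and> v * v = 1 \<and> e * v = v * e \<and>
      j \<in> jacobson \<and> a = e + v + j"
    and idem: "abs_jquot x * abs_jquot x = abs_jquot x"
  obtains P where "P * P = P" "abs_jquot P = abs_jquot x"
proof -
  obtain e v j where evj: "e * e = e" "v * v = 1" "e * v = v * e" "j \<in> jacobson" "x = e + v + j"
    using decomp by blast
  have x: "abs_jquot x = abs_jquot e + abs_jquot v"
    using evj(4,5) by (simp add: abs_jquot_hom abs_jquot_eq_0_iff)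
  have "abs_jquot e = 1 - abs_jquot x"
    unfolding x by (rule idempotent_plus_involution_idempotent)
      (use evj(1-3) idem x in \<open>simp_all flip: abs_jquot_hom\<close>)
  then have "abs_jquot (1 - e) = abs_jquot x" by (simp add: abs_jquot_hom)
  moreover have "(1 - e) * (1 - e) = 1 - e" using evj(1) by (simp add: algebra_simps)
  ultimately show ?thesis using that by blast
qed

lemma orthogonal_idempotent_lift:
  fixes P F :: "'a::ring_1"
  assumes P: "P * P = P" and F: "F * F = F" and PF: "P * F \<in> jacobson" and FP: "F * P \<in> jacobson"
  obtains Q where "Q * Q = Q" "P * Q = 0" "Q * P = 0" "abs_jquot Q = abs_jquot F"
proof -
  have "1 + - (P * F) \<in> units_of_ring" using PF by (intro one_plus_jacobson_unit jacobson_uminus)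
  then obtain w where w: "(1 - P * F) * w = 1" "w * (1 - P * F) = 1" by (auto elim: units_of_ringE)
  define G where "G = (1 - P * F) * F * w"
  have GG: "G * G = G"
  proof -
    have "G * G = (1 - P * F) * F * (w * (1 - P * F)) * F * w" unfolding G_def by (simp add: mult.assoc)
    also have "\<dots> = G" using w F unfolding G_def by (simp add: mult.assoc)
    finally show ?thesis .
  qed
  have "P * (1 - P * F) * F = 0" using P F by (simp add: algebra_simps mult.assoc[symmetric])
  then have PG: "P * G = 0" unfolding G_def by (simp add: mult.assoc[symmetric])
  define Q where "Q = G * (1 - P)"
  have "Q * Q = Q" unfolding Q_def
  proof -
    have "G * (1 - P) * (G * (1 - P)) = G * (G - P * G) * (1 - P)" by (simp add: algebra_simps)
    then show "G * (1 - P) * (G * (1 - P)) = G * (1 - P)" using PG GG by simp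
  qed
  moreover have "P * Q = 0" unfolding Q_def using PG by (simp add: mult.assoc[symmetric])
  moreover have "Q * P = 0" unfolding Q_def using P by (simp add: algebra_simps mult.assoc)
  moreover have "abs_jquot Q = abs_jquot F"
  proof -
    have PF0: "abs_jquot P * abs_jquot F = 0" and FP0: "abs_jquot F * abs_jquot P = 0"
      using PF FP by (simp_all add: abs_jquot_eq_0_iff flip: abs_jquot_mult)
    then have "abs_jquot w = 1" using arg_cong[OF w(1), of abs_jquot] by (simp add: abs_jquot_hom)
    moreover have "abs_jquot F * abs_jquot F = abs_jquot F" using F by (simp flip: abs_jquot_mult)
    ultimately show ?thesis unfolding Q_def G_def using PF0 FP0 by (simp add: abs_jquot_hom algebra_simps)
  qed
  ultimately show ?thesis using that by blast
qed

lemma orthogonal_idempotents_diff_tripotent: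
  fixes P Q :: "'a::ring_1"
  assumes "P * P = P" "Q * Q = Q" "P * Q = 0" "Q * P = 0"
  shows "(P - Q) * (P - Q) * (P - Q) = P - Q"
proof -
  have "(P - Q) * (P - Q) = P + Q" using assms by (simp add: algebra_simps)
  then show ?thesis using assms by (simp add: algebra_simps)
qed

lemma decomposition_imp_semi_tripotent:
  assumes decomp: "\<forall>a::'a::ring_1. \<exists>e v j. e * e = e \<and> v * v = 1 \<and> e * v = v * e \<and>
      j \<in> jacobson \<and> a = e + v + j"
  shows "semi_tripotent TYPE('a)"
  unfolding semi_tripotent_def
proof
  fix a :: 'a
  have sic: "strongly_invo_clean TYPE('a jquot)" using decomp by (rule strongly_invo_clean_jquot)
  have reduced: "w = 0" if "w + w = 0" "w * w = 0" for w :: "'a jquot"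
    using strongly_invo_clean_2torsion_square_zero_jacobson[OF sic that(2,1)] jacobson_jquot by blast
  obtain p q where pq: "p * p = p" "q * q = q" "p * q = 0" "q * p = 0" "abs_jquot a = p - q"
    using sic reduced by (rule strongly_invo_clean_orthogonal_idempotents)
  obtain x y where "abs_jquot x = p" "abs_jquot y = q" by (metis abs_jquot_surj)
  then obtain P F where P: "P * P = P" "abs_jquot P = p" and F: "F * F = F" "abs_jquot F = q"
    using idempotent_lift[OF decomp] pq(1,2) by metis
  have "P * F \<in> jacobson" "F * P \<in> jacobson"
    using pq(3,4) P(2) F(2) by (simp_all add: abs_jquot_eq_0_iff[symmetric] abs_jquot_mult)
  then obtain Q where Q: "Q * Q = Q" "P * Q = 0" "Q * P = 0" "abs_jquot Q = q"
    using orthogonal_idempotent_lift[OF P(1) F(1)] F(2) by metis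
  have "P - Q \<in> Tr"
    using orthogonal_idempotents_diff_tripotent[OF P(1) Q(1-3)] by (simp add: Tr_iff)
  moreover have "a - (P - Q) \<in> jacobson"
    using pq(5) P(2) Q(4) by (simp add: abs_jquot_eq_0_iff[symmetric] abs_jquot_hom)
  ultimately show "\<exists>e\<in>Tr. \<exists>j\<in>jacobson. a = e + j" by force
qed

theorem theorem4p13:
  shows "(DT_ring TYPE('a::ring_1) \<longleftrightarrow> semi_tripotent TYPE('a)) \<and>
         (semi_tripotent TYPE('a) \<longleftrightarrow>
           (\<forall>a::'a. \<exists>e v j. e * e = e \<and> v * v = 1 \<and> e * v = v * e \<and>
              j \<in> jacobson \<and> a = e + v + j))"
  using DT_ring_iff_semi_tripotent semi_tripotent_decomposition decomposition_imp_semi_tripotent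
  by metis

end
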